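(* Let $G$ be a connected graph of order $n\geq 9$ with minimum degree $\delta(G)\geq\frac{n+k}{3}$ for some integer $k\geq 3$. Then $prc(G)=\chi'(G)$.
   Context: A path in an edge-coloured graph is a rainbow path if its edges receive pairwise distinct colours. The proper rainbow connection number $prc(G)$ of a connected graph is the minimum number of colours in a proper edge-colouring (adjacent edges get distinct colours) such that every two distinct vertices are joined by a rainbow path. $\chi'(G)$ is the chromatic index. *)

theory Defs
  imports Complex_Main
begin

definition simple_graph :: "'a set \<Rightarrow> 'a set set \<Rightarrow> bool" where
  "simple_graph V E \<longleftrightarrow> finite V \<and> (\<forall>e\<in>E. \<exists>u v. e = {u, v} \<and> u \<noteq> v \<and> u \<in> V \<and> v \<in> V)"

definition degree :: "'a set set \<Rightarrow> 'a \<Rightarrow> nat" where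
  "degree E v = card {u. {u, v} \<in> E}"

definition is_path :: "'a set \<Rightarrow> 'a set set \<Rightarrow> 'a list \<Rightarrow> bool" where
  "is_path V E p \<longleftrightarrow> p \<noteq> [] \<and> set p \<subseteq> V \<and> distinct p \<and>
     (\<forall>i. Suc i < length p \<longrightarrow> {p ! i, p ! Suc i} \<in> E)"

definition path_edges :: "'a list \<Rightarrow> 'a set list" where
  "path_edges p = map (\<lambda>i. {p ! i, p ! Suc i}) [0..<length p - 1]"

definition connected_graph :: "'a set \<Rightarrow> 'a set set \<Rightarrow> bool" where
  "connected_graph V E \<longleftrightarrow> V \<noteq> {} \<and>
     (\<forall>u\<in>V. \<forall>v\<in>V. \<exists>p. is_path V E p \<and> hd p = u \<and> last p = v)"

definition proper_edge_colouring :: "'a set set \<Rightarrow> ('a set \<Rightarrow> nat) \<Rightarrow> nat \<Rightarrow> bool" where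
  "proper_edge_colouring E c k \<longleftrightarrow> c ` E \<subseteq> {..<k} \<and>
     (\<forall>e1\<in>E. \<forall>e2\<in>E. e1 \<noteq> e2 \<and> e1 \<inter> e2 \<noteq> {} \<longrightarrow> c e1 \<noteq> c e2)"

definition rainbow_path :: "'a set \<Rightarrow> 'a set set \<Rightarrow> ('a set \<Rightarrow> nat) \<Rightarrow> 'a list \<Rightarrow> bool" where
  "rainbow_path V E c p \<longleftrightarrow> is_path V E p \<and> distinct (map c (path_edges p))"

definition rainbow_connected :: "'a set \<Rightarrow> 'a set set \<Rightarrow> ('a set \<Rightarrow> nat) \<Rightarrow> bool" where
  "rainbow_connected V E c \<longleftrightarrow>
     (\<forall>u\<in>V. \<forall>v\<in>V. u \<noteq> v \<longrightarrow> (\<exists>p. rainbow_path V E c p \<and> hd p = u \<and> last p = v))"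

definition chromatic_index :: "'a set set \<Rightarrow> nat" where
  "chromatic_index E = (LEAST k. \<exists>c. proper_edge_colouring E c k)"

definition proper_rainbow_connection_number :: "'a set \<Rightarrow> 'a set set \<Rightarrow> nat" where
  "proper_rainbow_connection_number V E =
     (LEAST k. \<exists>c. proper_edge_colouring E c k \<and> rainbow_connected V E c)"

end

theory Submission
  imports Defs
begin

(* Every proper edge colouring of such a graph is already rainbow connected, so the two least
   numbers of colours coincide.  Since 3 delta >= n + 3, take x and y that are neither adjacent nor
   have a common neighbour, let X and Y be their neighbourhoods and R the remaining vertices;
   counting gives 3 |R| <= n - 12, so every vertex has at least 5 neighbours outside R and every
   vertex of R at least 6.  A rainbow x-y path with at most five edges then runs through an X-Y
   edge, or through a vertex of R adjacent to both X and Y, or else (by connectivity) through an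
   edge st inside R where s sees only X and t sees only Y.  Consecutive edges never clash in a
   proper colouring, and the many available neighbours allow choosing the inner vertices so as to
   avoid the few remaining forbidden colours. *)

lemma is_path_Cons_Cons:
  "is_path V E (u # w # p) \<longleftrightarrow> {u, w} \<in> E \<and> u \<in> V \<and> u \<notin> set (w # p) \<and> is_path V E (w # p)"
  unfolding is_path_def by (auto simp: nth_Cons split: nat.splits)

lemma path_edges_Cons_Cons: "path_edges (u # w # p) = {u, w} # path_edges (w # p)"
  unfolding path_edges_def by (simp add: upt_conv_Cons map_Suc_upt[symmetric] del: upt_Suc)

lemma path_edges_singleton: "path_edges [u] = []"
  unfolding path_edges_def by simp

lemma is_path_crosses_boundary:
  assumes "is_path V E p" "hd p \<in> S" "last p \<notin> S"
  shows "\<exists>s t. s \<in> S \<and> t \<notin> S \<and> {s, t} \<in> E"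
  using assms
proof (induction p rule: induct_list012)
  case (3 u w p)
  show ?case
  proof (cases "w \<in> S")
    case True
    with "3.IH"(2) "3.prems" show ?thesis by (simp add: is_path_Cons_Cons)
  next
    case False
    with "3.prems" show ?thesis by (auto simp: is_path_Cons_Cons)
  qed
qed (auto simp: is_path_def)

lemma ex_avoiding_two_by_card:
  assumes "card {u \<in> S. P u} + card {u \<in> S. Q u} < card S"
  shows "\<exists>u\<in>S. \<not> P u \<and> \<not> Q u"
proof (rule ccontr)
  assume "\<not> ?thesis"
  then have "S = {u \<in> S. P u} \<union> {u \<in> S. Q u}" by auto
  then have "card S \<le> card {u \<in> S. P u} + card {u \<in> S. Q u}"
    using card_Un_le by metis
  with assms show False by simp
qed

lemma prc_eq_chromatic_index_if_all_rainbow_connected: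
  assumes "\<And>c k. proper_edge_colouring E c k \<Longrightarrow> rainbow_connected V E c"
  shows "proper_rainbow_connection_number V E = chromatic_index E"
proof -
  have "(\<lambda>k. \<exists>c. proper_edge_colouring E c k \<and> rainbow_connected V E c) =
        (\<lambda>k. \<exists>c. proper_edge_colouring E c k)"
    using assms by blast
  then show ?thesis
    unfolding proper_rainbow_connection_number_def chromatic_index_def by simp
qed

locale properly_coloured_graph =
  fixes V :: "'a set" and E :: "'a set set" and c :: "'a set \<Rightarrow> nat" and m :: nat
  assumes simple: "simple_graph V E"
    and proper: "proper_edge_colouring E c m"
begin

definition nbrs :: "'a \<Rightarrow> 'a set" where
  "nbrs v = {u. {u, v} \<in> E}"

lemma mem_nbrs_iff: "u \<in> nbrs v \<longleftrightarrow> {u, v} \<in> E"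
  by (simp add: nbrs_def)

lemma edge_endpoints: "{u, v} \<in> E \<Longrightarrow> u \<in> V \<and> v \<in> V \<and> u \<noteq> v"
  using simple unfolding simple_graph_def by (force simp: doubleton_eq_iff)

lemma finite_vertices: "finite V"
  using simple unfolding simple_graph_def by blast

lemma nbrs_subset: "nbrs v \<subseteq> V"
  using edge_endpoints by (auto simp: nbrs_def)

lemma finite_nbrs: "finite (nbrs v)"
  using nbrs_subset finite_vertices by (rule finite_subset)

lemma nbrs_sym: "u \<in> nbrs v \<longleftrightarrow> v \<in> nbrs u"
  by (simp add: nbrs_def insert_commute)

lemma edge_if_mem_nbrs: "u \<in> nbrs v \<Longrightarrow> {u, v} \<in> E" "u \<in> nbrs v \<Longrightarrow> {v, u} \<in> E"
  by (simp_all add: nbrs_def insert_commute)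

lemma not_mem_nbrs_self: "v \<notin> nbrs v"
  using edge_endpoints[of v v] by (auto simp: nbrs_def)

lemma card_nbrs: "card (nbrs v) = degree E v"
  by (simp add: nbrs_def degree_def)

lemma colour_adjacent_edges:
  assumes "{u, v} \<in> E" "{v, w} \<in> E" "u \<noteq> w"
  shows "c {u, v} \<noteq> c {v, w}"
proof -
  have "{u, v} \<noteq> {v, w}" "{u, v} \<inter> {v, w} \<noteq> {}"
    using assms(3) by (auto simp: doubleton_eq_iff)
  then show ?thesis
    using proper assms(1,2) unfolding proper_edge_colouring_def by simp
qed

lemma colour_inj_at_vertex:
  assumes "u \<in> nbrs v" "w \<in> nbrs v" "c {u, v} = c {w, v}"
  shows "u = w"
  using assms colour_adjacent_edges[of u v w] by (auto simp: mem_nbrs_iff insert_commute)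

lemma rainbow_path_pair: "rainbow_path V E c [u, w] \<longleftrightarrow> {u, w} \<in> E"
  by (auto simp: rainbow_path_def is_path_Cons_Cons path_edges_Cons_Cons path_edges_singleton
      is_path_def dest: edge_endpoints)

text \<open>In a proper colouring consecutive edges of a path never clash, so only the colours of
  non-consecutive edges have to be compared.\<close>
lemma rainbow_path_Cons_Cons_Cons:
  "rainbow_path V E c (u # w # v # p) \<longleftrightarrow>
     {u, w} \<in> E \<and> u \<notin> set (v # p) \<and> c {u, w} \<notin> c ` set (path_edges (v # p)) \<and>
     rainbow_path V E c (w # v # p)"
proof -
  have "rainbow_path V E c (u # w # v # p) \<longleftrightarrow>
     {u, w} \<in> E \<and> u \<in> V \<and> u \<notin> set (w # v # p) \<and> c {u, w} \<noteq> c {w, v} \<and>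
     c {u, w} \<notin> c ` set (path_edges (v # p)) \<and> rainbow_path V E c (w # v # p)"
    by (auto simp: rainbow_path_def is_path_Cons_Cons path_edges_Cons_Cons)
  moreover have "c {u, w} \<noteq> c {w, v}" if "{u, w} \<in> E" "u \<noteq> v" "rainbow_path V E c (w # v # p)"
    using that colour_adjacent_edges by (simp add: rainbow_path_def is_path_Cons_Cons)
  ultimately show ?thesis
    using edge_endpoints[of u w] by auto
qed

lemma card_nbrs_coloured_in_le:
  assumes "S \<subseteq> nbrs v"
  shows "card {u \<in> S. c {u, v} \<in> set cs} \<le> length cs"
proof -
  have "inj_on (\<lambda>u. c {u, v}) {u \<in> S. c {u, v} \<in> set cs}"
    using assms colour_inj_at_vertex by (intro inj_onI) blast
  then have "card {u \<in> S. c {u, v} \<in> set cs} \<le> card (set cs)"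
    by (rule card_inj_on_le) auto
  also have "\<dots> \<le> length cs" by (rule card_length)
  finally show ?thesis .
qed

lemma ex_nbr_avoiding_colours2:
  assumes "S \<subseteq> nbrs v" "S \<subseteq> nbrs w" "length cs + length ds < card S"
  shows "\<exists>u\<in>S. c {u, v} \<notin> set cs \<and> c {u, w} \<notin> set ds"
  using assms card_nbrs_coloured_in_le[of S v cs] card_nbrs_coloured_in_le[of S w ds]
  by (intro ex_avoiding_two_by_card) linarith

lemma ex_nbr_avoiding_colours:
  assumes "S \<subseteq> nbrs v" "length cs < card S"
  shows "\<exists>u\<in>S. c {u, v} \<notin> set cs"
  using ex_nbr_avoiding_colours2[of S v v cs "[]"] assms by auto

lemmas rainbow_path_simps =
  rainbow_path_Cons_Cons_Cons rainbow_path_pair path_edges_Cons_Cons path_edges_singleton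

end

locale dense_coloured_graph = properly_coloured_graph +
  assumes min_degree: "\<forall>v\<in>V. card V + 3 \<le> 3 * degree E v"
begin

lemma min_card_nbrs: "v \<in> V \<Longrightarrow> card V + 3 \<le> 3 * card (nbrs v)"
  using min_degree by (simp add: card_nbrs)

end

locale far_pair = dense_coloured_graph +
  fixes x y :: 'a
  assumes x_in_V: "x \<in> V" and y_in_V: "y \<in> V" and x_neq_y: "x \<noteq> y"
    and not_adjacent: "{x, y} \<notin> E"
    and no_common_nbr: "nbrs x \<inter> nbrs y = {}"
begin

abbreviation X :: "'a set" where "X \<equiv> nbrs x"
abbreviation Y :: "'a set" where "Y \<equiv> nbrs y"
abbreviation R :: "'a set" where "R \<equiv> V - ({x, y} \<union> X \<union> Y)"

lemma endpoints_not_in_nbrs: "x \<notin> X" "y \<notin> Y" "x \<notin> Y" "y \<notin> X"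
  using not_mem_nbrs_self not_adjacent by (auto simp: mem_nbrs_iff insert_commute)

lemma endpoints_not_in_nbrs_rest: "v \<in> R \<Longrightarrow> x \<notin> nbrs v" "v \<in> R \<Longrightarrow> y \<notin> nbrs v"
  using nbrs_sym by blast+

lemma card_rest: "3 * card R + 12 \<le> card V"
proof -
  have "card ({x, y} \<union> X \<union> Y) = 2 + card X + card Y"
    using x_neq_y no_common_nbr finite_nbrs endpoints_not_in_nbrs by (simp add: card_Un_disjoint)
  moreover have "card R = card V - card ({x, y} \<union> X \<union> Y)"
    using x_in_V y_in_V nbrs_subset finite_nbrs by (intro card_Diff_subset) auto
  moreover have "card ({x, y} \<union> X \<union> Y) \<le> card V"
    using x_in_V y_in_V nbrs_subset finite_vertices by (intro card_mono) auto
  ultimately show ?thesis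
    using min_card_nbrs[OF x_in_V] min_card_nbrs[OF y_in_V] by linarith
qed

lemma card_nbrs_le_outside_rest: "card (nbrs v) \<le> card (nbrs v - R) + card (R - {v})"
proof -
  have "nbrs v \<subseteq> (nbrs v - R) \<union> (R - {v})"
    using not_mem_nbrs_self by auto
  then have "card (nbrs v) \<le> card ((nbrs v - R) \<union> (R - {v}))"
    using finite_nbrs finite_vertices by (intro card_mono) auto
  also have "\<dots> \<le> card (nbrs v - R) + card (R - {v})"
    by (rule card_Un_le)
  finally show ?thesis .
qed

lemma five_le_card_if_nbrs_outside_rest_subset:
  assumes "v \<in> V" "nbrs v - R \<subseteq> A" "finite A"
  shows "5 \<le> card A"
  using card_nbrs_le_outside_rest[of v] card_Diff1_le[of R v] min_card_nbrs[of v] card_rest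
    card_mono[OF assms(3,2)] assms(1) by linarith

lemma six_le_card_if_nbrs_outside_rest_subset:
  assumes "v \<in> R" "nbrs v - R \<subseteq> A" "finite A"
  shows "6 \<le> card A"
  using card_nbrs_le_outside_rest[of v] card_Diff1_less[of R v] min_card_nbrs[of v] card_rest
    card_mono[OF assms(3,2)] assms(1) finite_vertices by auto

lemma rainbow_path_if_X_Y_edge:
  assumes a: "a \<in> X" and b: "b \<in> Y" and ab: "{a, b} \<in> E"
  shows "\<exists>p. rainbow_path V E c p \<and> hd p = x \<and> last p = y"
proof -
  have ne: "a \<notin> Y" "b \<notin> X" "x \<noteq> b" "a \<noteq> y" "a \<noteq> x"
    using a b no_common_nbr endpoints_not_in_nbrs by blast+
  have edge_xa: "{x, a} \<in> E" and edge_by: "{b, y} \<in> E"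
    using a b by (simp_all add: edge_if_mem_nbrs)
  consider (direct) "c {x, a} \<noteq> c {b, y}"
    | (switch) b' where "c {x, a} = c {b, y}" "b' \<in> nbrs a \<inter> Y" "b' \<noteq> b"
    | (detour) "c {x, a} = c {b, y}" "nbrs a \<inter> Y \<subseteq> {b}"
    by blast
  then show ?thesis
  proof cases
    case direct
    then have "rainbow_path V E c [x, a, b, y]"
      using edge_xa ab edge_by ne x_neq_y by (simp add: rainbow_path_simps)
    then show ?thesis by force
  next
    case switch
    have "c {b', y} \<noteq> c {b, y}"
      using switch b colour_inj_at_vertex by blast
    moreover have "{a, b'} \<in> E" "{b', y} \<in> E" "x \<noteq> b'"
      using switch endpoints_not_in_nbrs(3) edge_if_mem_nbrs by blast+
    ultimately have "rainbow_path V E c [x, a, b', y]"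
      using switch edge_xa ne x_neq_y by (simp add: rainbow_path_simps)
    then show ?thesis by force
  next
    case detour
    have "y \<notin> nbrs a"
      using ne(1) nbrs_sym by blast
    then have "nbrs a - R \<subseteq> {x, b} \<union> (nbrs a \<inter> X)"
      using detour(2) nbrs_subset[of a] by blast
    then have "5 \<le> card ({x, b} \<union> (nbrs a \<inter> X))"
      using a nbrs_subset finite_nbrs by (intro five_le_card_if_nbrs_outside_rest_subset) auto
    moreover have "card {x, b} \<le> 2"
      by (simp add: card_insert_if)
    ultimately have "1 < card (nbrs a \<inter> X)"
      using card_Un_le[of "{x, b}" "nbrs a \<inter> X"] by linarith
    then obtain a' where a': "a' \<in> nbrs a" "a' \<in> X" "c {a', x} \<noteq> c {a, b}"
      using ex_nbr_avoiding_colours[of "nbrs a \<inter> X" x "[c {a, b}]"] by auto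
    have ne': "a' \<noteq> a" "x \<noteq> a'" "a' \<noteq> b" "a' \<noteq> y"
      using a' ne endpoints_not_in_nbrs not_mem_nbrs_self by blast+
    have "c {x, a'} \<noteq> c {x, a}"
      using colour_inj_at_vertex[of a' x a] a' a ne' by (metis insert_commute)
    moreover have "c {a', a} \<noteq> c {x, a}"
      using colour_inj_at_vertex[of a' a x] a' a ne' nbrs_sym by blast
    moreover have "c {x, a'} \<noteq> c {a, b}"
      using a'(3) by (metis insert_commute)
    moreover have "{x, a'} \<in> E" "{a', a} \<in> E"
      using a' by (simp_all add: edge_if_mem_nbrs)
    ultimately have "rainbow_path V E c [x, a', a, b, y]"
      using detour(1) ab edge_by ne ne' x_neq_y by (simp add: rainbow_path_simps)
    then show ?thesis by force
  qed
qed

lemma rainbow_path_through_rest_vertex: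
  assumes r: "r \<in> R" and a: "a \<in> nbrs r \<inter> X" and b: "b \<in> nbrs r \<inter> Y"
    and "c {a, r} \<noteq> c {b, y}"
  shows "rainbow_path V E c [a, r, b, y]"
proof -
  have "{a, r} \<in> E" "{r, b} \<in> E" "{b, y} \<in> E"
    using a b edge_if_mem_nbrs by blast+
  moreover have "a \<noteq> b" "a \<noteq> y" "r \<noteq> y"
    using a b r no_common_nbr endpoints_not_in_nbrs by blast+
  ultimately show ?thesis
    using assms(4) by (simp add: rainbow_path_simps)
qed

lemma rainbow_path_via_rest_vertex_direct:
  assumes r: "r \<in> R" and a: "a \<in> nbrs r \<inter> X" and b: "b \<in> nbrs r \<inter> Y"
    and "c {a, r} \<noteq> c {b, y}" and "c {x, a} \<notin> {c {r, b}, c {b, y}}"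
  shows "rainbow_path V E c [x, a, r, b, y]"
proof -
  have "{x, a} \<in> E"
    using a edge_if_mem_nbrs by blast
  moreover have "x \<noteq> r" "x \<noteq> b"
    using r b endpoints_not_in_nbrs by blast+
  ultimately show ?thesis
    using rainbow_path_through_rest_vertex[OF r a b assms(4)] assms(5) x_neq_y
    by (simp add: rainbow_path_Cons_Cons_Cons path_edges_Cons_Cons path_edges_singleton)
qed

lemma rainbow_path_via_rest_vertex_detour:
  assumes no_X_Y_edge: "\<forall>a\<in>X. \<forall>b\<in>Y. {a, b} \<notin> E"
    and r: "r \<in> R" and a: "a \<in> nbrs r \<inter> X" and b: "b \<in> nbrs r \<inter> Y"
    and "c {a, r} \<noteq> c {b, y}" and clash: "c {x, a} \<in> {c {r, b}, c {b, y}}"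
  shows "\<exists>p. rainbow_path V E c p \<and> hd p = x \<and> last p = y"
proof -
  obtain k where k: "{c {r, b}, c {b, y}} \<subseteq> {c {x, a}, k}"
    using clash by (cases "c {x, a} = c {r, b}") auto
  have "y \<notin> nbrs a"
    using a no_common_nbr nbrs_sym[of y a] by blast
  moreover have "nbrs a \<inter> Y = {}"
    using a no_X_Y_edge edge_if_mem_nbrs(2)[of _ a] by blast
  ultimately have "nbrs a - R \<subseteq> {x} \<union> (nbrs a \<inter> X)"
    using nbrs_subset[of a] by blast
  then have "5 \<le> card ({x} \<union> (nbrs a \<inter> X))"
    using a nbrs_subset finite_nbrs by (intro five_le_card_if_nbrs_outside_rest_subset) auto
  then have "3 < card (nbrs a \<inter> X)"
    using card_Un_le[of "{x}" "nbrs a \<inter> X"] by simp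
  then obtain a' where a': "a' \<in> nbrs a" "a' \<in> X" "c {a', x} \<notin> {c {a, r}, k}" "c {a', a} \<noteq> k"
    using ex_nbr_avoiding_colours2[of "nbrs a \<inter> X" x a "[c {a, r}, k]" "[k]"] by auto
  have ne: "a' \<noteq> a" "x \<noteq> a'" "x \<noteq> a" "x \<noteq> r" "x \<noteq> b" "a' \<noteq> r" "a' \<noteq> b" "a' \<noteq> y"
    using a' a b r endpoints_not_in_nbrs not_mem_nbrs_self no_common_nbr by blast+
  have "c {a', x} \<noteq> c {a, x}"
    using colour_inj_at_vertex[of a' x a] a' a ne(1) by blast
  then have "c {x, a'} \<noteq> c {x, a}"
    by (simp add: insert_commute)
  moreover have "c {x, a'} \<notin> {c {a, r}, k}"
    using a'(3) by (simp add: insert_commute)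
  ultimately have "c {x, a'} \<notin> {c {a, r}, c {r, b}, c {b, y}}"
    using k by blast
  moreover have "c {a', a} \<noteq> c {x, a}"
    using colour_inj_at_vertex[of a' a x] a' a ne nbrs_sym by blast
  then have "c {a', a} \<notin> {c {r, b}, c {b, y}}"
    using a'(4) k by auto
  moreover have "{x, a'} \<in> E" "{a', a} \<in> E"
    using a' edge_if_mem_nbrs by blast+
  ultimately have "rainbow_path V E c [x, a', a, r, b, y]"
    using rainbow_path_through_rest_vertex[OF r a b assms(5)] ne x_neq_y
    by (simp add: rainbow_path_Cons_Cons_Cons path_edges_Cons_Cons path_edges_singleton)
  then show ?thesis by force
qed

lemma rainbow_path_via_rest_vertex:
  assumes no_X_Y_edge: "\<forall>a\<in>X. \<forall>b\<in>Y. {a, b} \<notin> E"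
    and r: "r \<in> R" and "nbrs r \<inter> X \<noteq> {}" "nbrs r \<inter> Y \<noteq> {}"
  shows "\<exists>p. rainbow_path V E c p \<and> hd p = x \<and> last p = y"
proof -
  have "nbrs r - R \<subseteq> (nbrs r \<inter> X) \<union> (nbrs r \<inter> Y)"
    using nbrs_subset[of r] endpoints_not_in_nbrs_rest[OF r] by blast
  then have "6 \<le> card ((nbrs r \<inter> X) \<union> (nbrs r \<inter> Y))"
    using r finite_nbrs by (intro six_le_card_if_nbrs_outside_rest_subset) auto
  then have "6 \<le> card (nbrs r \<inter> X) + card (nbrs r \<inter> Y)"
    using card_Un_le[of "nbrs r \<inter> X" "nbrs r \<inter> Y"] by linarith
  then consider (many_Y) "3 < card (nbrs r \<inter> Y)" | (many_X) "1 < card (nbrs r \<inter> X)"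
    by linarith
  then show ?thesis
  proof cases
    case many_Y
    obtain a where a: "a \<in> nbrs r \<inter> X"
      using assms(3) by blast
    obtain b where b: "b \<in> nbrs r \<inter> Y" "c {b, r} \<noteq> c {x, a}" "c {b, y} \<notin> {c {x, a}, c {a, r}}"
      using ex_nbr_avoiding_colours2[of "nbrs r \<inter> Y" r y "[c {x, a}]" "[c {x, a}, c {a, r}]"] many_Y
      by auto
    then have "c {x, a} \<notin> {c {r, b}, c {b, y}}" "c {a, r} \<noteq> c {b, y}"
      by (auto simp: insert_commute)
    then have "rainbow_path V E c [x, a, r, b, y]"
      using rainbow_path_via_rest_vertex_direct[OF r a b(1)] by blast
    then show ?thesis by force
  next
    case many_X
    obtain b where b: "b \<in> nbrs r \<inter> Y"
      using assms(4) by blast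
    obtain a where a: "a \<in> nbrs r \<inter> X" "c {a, r} \<noteq> c {b, y}"
      using ex_nbr_avoiding_colours[of "nbrs r \<inter> X" r "[c {b, y}]"] many_X by auto
    show ?thesis
    proof (cases "c {x, a} \<in> {c {r, b}, c {b, y}}")
      case True
      then show ?thesis
        using rainbow_path_via_rest_vertex_detour[OF no_X_Y_edge r a(1) b a(2)] by blast
    next
      case False
      then show ?thesis
        using rainbow_path_via_rest_vertex_direct[OF r a(1) b a(2)] by force
    qed
  qed
qed

lemma rainbow_path_via_rest_edge:
  assumes s: "s \<in> R" and t: "t \<in> R" and st: "{s, t} \<in> E"
    and "nbrs s \<inter> Y = {}" and "nbrs t \<inter> X = {}"
  shows "\<exists>p. rainbow_path V E c p \<and> hd p = x \<and> last p = y"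
proof -
  have "nbrs t - R \<subseteq> nbrs t \<inter> Y"
    using assms(5) nbrs_subset[of t] endpoints_not_in_nbrs_rest[OF t] by blast
  then have "6 \<le> card (nbrs t \<inter> Y)"
    using t finite_nbrs by (intro six_le_card_if_nbrs_outside_rest_subset) auto
  then obtain b where b: "b \<in> nbrs t" "b \<in> Y" "c {b, y} \<noteq> c {s, t}"
    using ex_nbr_avoiding_colours[of "nbrs t \<inter> Y" y "[c {s, t}]"] by auto
  have "nbrs s - R \<subseteq> nbrs s \<inter> X"
    using assms(4) nbrs_subset[of s] endpoints_not_in_nbrs_rest[OF s] by blast
  then have "6 \<le> card (nbrs s \<inter> X)"
    using s finite_nbrs by (intro six_le_card_if_nbrs_outside_rest_subset) auto
  then obtain a where a: "a \<in> nbrs s" "a \<in> X"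
      "c {a, x} \<notin> {c {s, t}, c {t, b}, c {b, y}}" "c {a, s} \<notin> {c {t, b}, c {b, y}}"
    using ex_nbr_avoiding_colours2[of "nbrs s \<inter> X" x s "[c {s, t}, c {t, b}, c {b, y}]"
        "[c {t, b}, c {b, y}]"]
    by auto
  have "c {x, a} \<notin> {c {s, t}, c {t, b}, c {b, y}}"
    using a(3) by (simp add: insert_commute)
  moreover have "{x, a} \<in> E" "{a, s} \<in> E" "{t, b} \<in> E" "{b, y} \<in> E"
    using a b edge_if_mem_nbrs by blast+
  moreover have "x \<noteq> s" "x \<noteq> t" "x \<noteq> b" "a \<noteq> t" "a \<noteq> b" "a \<noteq> y"
      "s \<noteq> b" "s \<noteq> y" "t \<noteq> y"
    using a b s t no_common_nbr endpoints_not_in_nbrs by blast+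
  ultimately have "rainbow_path V E c [x, a, s, t, b, y]"
    using a(4) b(3) st x_neq_y by (simp add: rainbow_path_simps)
  then show ?thesis by force
qed

text \<open>Walk from \<open>x\<close> to \<open>y\<close> and leave the set of vertices that are \<open>x\<close>, in \<open>X\<close>, or in \<open>R\<close>
  and adjacent to \<open>X\<close>; the hypotheses force the leaving edge to lie inside \<open>R\<close>.\<close>
lemma obtain_rest_edge:
  assumes "connected_graph V E"
    and no_X_Y_edge: "\<forall>a\<in>X. \<forall>b\<in>Y. {a, b} \<notin> E"
    and no_rest_vertex: "\<forall>r\<in>R. nbrs r \<inter> X = {} \<or> nbrs r \<inter> Y = {}"
  obtains s t where "s \<in> R" "t \<in> R" "{s, t} \<in> E" "nbrs s \<inter> Y = {}" "nbrs t \<inter> X = {}"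
proof -
  define S where "S = {x} \<union> X \<union> {r \<in> R. nbrs r \<inter> X \<noteq> {}}"
  obtain p where "is_path V E p" "hd p = x" "last p = y"
    using assms(1) x_in_V y_in_V unfolding connected_graph_def by blast
  moreover have "x \<in> S" "y \<notin> S"
    using x_neq_y endpoints_not_in_nbrs unfolding S_def by auto
  ultimately obtain s t where st: "s \<in> S" "t \<notin> S" "{s, t} \<in> E"
    using is_path_crosses_boundary by metis
  have t_nbr: "t \<in> nbrs s" "s \<in> nbrs t" and "t \<in> V"
    using st(3) edge_endpoints by (auto simp: mem_nbrs_iff insert_commute)
  have "s \<notin> X"
  proof
    assume "s \<in> X"
    then have "t \<notin> Y" "t \<noteq> y"
      using no_X_Y_edge st(3) no_common_nbr t_nbr(2) by auto
    with \<open>s \<in> X\<close> show False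
      using st(2) t_nbr(2) \<open>t \<in> V\<close> unfolding S_def by auto
  qed
  moreover have "s \<noteq> x"
    using st t_nbr(1) unfolding S_def by auto
  ultimately have s: "s \<in> R" "nbrs s \<inter> X \<noteq> {}"
    using st(1) unfolding S_def by auto
  with no_rest_vertex have "nbrs s \<inter> Y = {}"
    by blast
  moreover have "t \<in> R"
    using st(2) t_nbr \<open>t \<in> V\<close> s \<open>nbrs s \<inter> Y = {}\<close> endpoints_not_in_nbrs_rest(2)[OF s(1)]
    unfolding S_def by (auto simp: nbrs_sym[of y])
  moreover have "nbrs t \<inter> X = {}"
    using st(2) \<open>t \<in> R\<close> unfolding S_def by auto
  ultimately show ?thesis
    using that s(1) st(3) by blast
qed

lemma rainbow_path_far_pair:
  assumes "connected_graph V E"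
  shows "\<exists>p. rainbow_path V E c p \<and> hd p = x \<and> last p = y"
proof (cases "\<exists>a\<in>X. \<exists>b\<in>Y. {a, b} \<in> E")
  case True
  then show ?thesis
    using rainbow_path_if_X_Y_edge by blast
next
  case no_X_Y_edge: False
  show ?thesis
  proof (cases "\<exists>r\<in>R. nbrs r \<inter> X \<noteq> {} \<and> nbrs r \<inter> Y \<noteq> {}")
    case True
    with no_X_Y_edge show ?thesis
      using rainbow_path_via_rest_vertex by blast
  next
    case False
    with no_X_Y_edge assms obtain s t
      where "s \<in> R" "t \<in> R" "{s, t} \<in> E" "nbrs s \<inter> Y = {}" "nbrs t \<inter> X = {}"
      by (metis obtain_rest_edge)
    then show ?thesis
      by (rule rainbow_path_via_rest_edge)
  qed
qed

end

context dense_coloured_graph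
begin

lemma rainbow_connected_if_connected:
  assumes "connected_graph V E"
  shows "rainbow_connected V E c"
  unfolding rainbow_connected_def
proof (intro ballI impI)
  fix x y
  assume x: "x \<in> V" and y: "y \<in> V" and "x \<noteq> y"
  consider (adjacent) "{x, y} \<in> E"
    | (common_nbr) w where "w \<in> nbrs x" "w \<in> nbrs y"
    | (far) "{x, y} \<notin> E" "nbrs x \<inter> nbrs y = {}"
    by blast
  then show "\<exists>p. rainbow_path V E c p \<and> hd p = x \<and> last p = y"
  proof cases
    case adjacent
    then have "rainbow_path V E c [x, y]"
      by (simp add: rainbow_path_pair)
    then show ?thesis by force
  next
    case common_nbr
    then have "rainbow_path V E c [x, w, y]"
      using \<open>x \<noteq> y\<close> edge_if_mem_nbrs by (simp add: rainbow_path_simps)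
    then show ?thesis by force
  next
    case far
    interpret far_pair V E c m x y
      using dense_coloured_graph_axioms x y \<open>x \<noteq> y\<close> far
      by (simp add: far_pair_def far_pair_axioms_def)
    show ?thesis
      using assms by (rule rainbow_path_far_pair)
  qed
qed

end

theorem proposition5p12:
  fixes V :: "'a set" and E :: "'a set set" and k :: int
  assumes "simple_graph V E"
    and "connected_graph V E"
    and "card V \<ge> 9"
    and "k \<ge> 3"
    and "\<forall>v\<in>V. real (degree E v) \<ge> (real (card V) + real_of_int k) / 3"
  shows "proper_rainbow_connection_number V E = chromatic_index E"
proof -
  have min_degree: "\<forall>v\<in>V. card V + 3 \<le> 3 * degree E v"
  proof
    fix v
    assume "v \<in> V"
    then have "real (card V) + real_of_int k \<le> 3 * real (degree E v)"
      using assms(5) by auto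
    then show "card V + 3 \<le> 3 * degree E v"
      using assms(4) by linarith
  qed
  have "rainbow_connected V E c" if "proper_edge_colouring E c m" for c m
  proof -
    interpret dense_coloured_graph V E c m
      using assms(1) that min_degree by unfold_locales
    show ?thesis
      using assms(2) by (rule rainbow_connected_if_connected)
  qed
  then show ?thesis
    by (rule prc_eq_chromatic_index_if_all_rainbow_connected)
qed

end
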